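(* Let $(A_k,b_k,c_k)_{k\in\mathbb{Z}}$ define the discrete-time system $x_{k+1}=A_kx_k+b_ku_k$, $y_k=c_kx_k$, with $A_k\in\mathbb{R}^{n\times n}$, $b_k\in\mathbb{R}^{n\times1}$, $c_k\in\mathbb{R}^{1\times n}$. The system is completely controllable if and only if it is algebraically equivalent to a system $(\tilde A_k,\tilde b_k,\tilde c_k)_{k\in\mathbb{Z}}$ in controller canonical form.
   Context: Complete controllability: for every $k\in\mathbb{Z}$ and every $\xi_s,\xi_f\in\mathbb{R}^n$ there are controls $u_k,\dots,u_{k+n-1}$ such that $x_k=\xi_s$ implies $x_{k+n}=\xi_f$. Two systems $(A_k,b_k,c_k)_{k\in\mathbb{Z}}$ and $(\tilde A_k,\tilde b_k,\tilde c_k)_{k\in\mathbb{Z}}$ are algebraically equivalent if there are invertible matrices $\{T_k\}_{k\in\mathbb{Z}}$ with $\tilde A_k=T_{k+1}A_kT_k^{-1}$, $\tilde b_k=T_{k+1}b_k$, $\tilde c_k=c_kT_k^{-1}$ for all $k$. A system is in controller canonical form if for every $k$, $b_k=(0,\dots,0,1)^T$ and $A_k$ has ones on the superdiagonal (entries $(i,i+1)$, $i=1,\dots,n-1$), zeros elsewhere in the first $n-1$ rows, and an arbitrary last row $(\alpha_{k,1},\dots,\alpha_{k,n})$. *)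

theory Defs
  imports "Jordan_Normal_Form.Matrix"
begin

definition is_system :: "nat \<Rightarrow> (int \<Rightarrow> real mat) \<Rightarrow> (int \<Rightarrow> real mat) \<Rightarrow> (int \<Rightarrow> real mat) \<Rightarrow> bool" where
  "is_system n A b c \<longleftrightarrow>
     (\<forall>k. A k \<in> carrier_mat n n \<and> b k \<in> carrier_mat n 1 \<and> c k \<in> carrier_mat 1 n)"

fun state :: "(int \<Rightarrow> real mat) \<Rightarrow> (int \<Rightarrow> real mat) \<Rightarrow> int \<Rightarrow> real vec \<Rightarrow> (int \<Rightarrow> real) \<Rightarrow> nat \<Rightarrow> real vec" where
  "state A b k xi u 0 = xi"
| "state A b k xi u (Suc j) =
     A (k + int j) *\<^sub>v state A b k xi u j + u (k + int j) \<cdot>\<^sub>v col (b (k + int j)) 0"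

definition completely_controllable :: "nat \<Rightarrow> (int \<Rightarrow> real mat) \<Rightarrow> (int \<Rightarrow> real mat) \<Rightarrow> bool" where
  "completely_controllable n A b \<longleftrightarrow>
     (\<forall>k. \<forall>xs \<in> carrier_vec n. \<forall>xf \<in> carrier_vec n.
        \<exists>u :: int \<Rightarrow> real. state A b k xs u n = xf)"

definition alg_equivalent ::
  "nat \<Rightarrow> (int \<Rightarrow> real mat) \<Rightarrow> (int \<Rightarrow> real mat) \<Rightarrow> (int \<Rightarrow> real mat) \<Rightarrow>
   (int \<Rightarrow> real mat) \<Rightarrow> (int \<Rightarrow> real mat) \<Rightarrow> (int \<Rightarrow> real mat) \<Rightarrow> bool" where
  "alg_equivalent n A b c A' b' c' \<longleftrightarrow>
     (\<exists>T Ti :: int \<Rightarrow> real mat. \<forall>k.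
        T k \<in> carrier_mat n n \<and> Ti k \<in> carrier_mat n n \<and>
        T k * Ti k = 1\<^sub>m n \<and> Ti k * T k = 1\<^sub>m n \<and>
        A' k = T (k + 1) * A k * Ti k \<and>
        b' k = T (k + 1) * b k \<and>
        c' k = c k * Ti k)"

text \<open>Controller canonical form (0-based indices): b k = (0,...,0,1)^T, and in the first
  n-1 rows of A k the only nonzero entries are ones on the superdiagonal; the last row is
  arbitrary.\<close>

definition controller_canonical :: "nat \<Rightarrow> (int \<Rightarrow> real mat) \<Rightarrow> (int \<Rightarrow> real mat) \<Rightarrow> bool" where
  "controller_canonical n A b \<longleftrightarrow>
     (\<forall>k. (\<forall>i<n. b k $$ (i, 0) = (if i = n - 1 then 1 else 0)) \<and>
          (\<forall>i<n - 1. \<forall>j<n. A k $$ (i, j) = (if j = i + 1 then 1 else 0)))"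

end

theory Submission
  imports Defs "Jordan_Normal_Form.Determinant"
begin

(* Let R_k be the reachability matrix of the window [k, k + n): its l-th column is
   Phi(k + n, k + l + 1) b_{k+l}, and the state reached from 0 is R_k applied to the inputs,
   so complete controllability makes every R_k invertible.  Let q_m be the first row of the
   inverse of the reachability matrix of the window ending at m, and let T_k have the rows
   q_{k+j} Phi(k + j, k), j < n.  Since Phi(k + 1 + i, k + 1) A_k = Phi(k + 1 + i, k), row i of
   T_{k+1} A_k is row i + 1 of T_k, and T_{k+1} b_k is a column of some R^-1 R; this is the
   controller canonical form.  T_k R_{k-n} is lower unitriangular, so T_k is invertible.
   Conversely, a system in canonical form is a shift register that can be loaded with any state
   in n steps, and algebraic equivalence maps trajectories to trajectories. *)

locale linear_system =
  fixes n :: nat and A b :: "int \<Rightarrow> real mat"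
  assumes A_carrier[simp]: "A k \<in> carrier_mat n n"
    and b_carrier[simp]: "b k \<in> carrier_mat n 1"
begin

primrec transition :: "int \<Rightarrow> nat \<Rightarrow> real mat" where
  "transition k 0 = 1\<^sub>m n"
| "transition k (Suc j) = A (k + int j) * transition k j"

definition reach_mat :: "int \<Rightarrow> nat \<Rightarrow> real mat" where
  "reach_mat k j =
     mat n j (\<lambda>(i, l). (transition (k + int l + 1) (j - l - 1) *\<^sub>v col (b (k + int l)) 0) $ i)"

lemma dim_A[simp]: "dim_row (A k) = n" "dim_col (A k) = n"
  and dim_b[simp]: "dim_row (b k) = n" "dim_col (b k) = 1"
  using A_carrier b_carrier by blast+

lemma transition_carrier[simp]: "transition k j \<in> carrier_mat n n"
  by (induction j) (auto intro: mult_carrier_mat)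

lemma dim_transition[simp]: "dim_row (transition k j) = n" "dim_col (transition k j) = n"
  using transition_carrier by blast+

lemma b_col_carrier[simp]: "col (b k) 0 \<in> carrier_vec n"
  using b_carrier[of k] by (simp add: carrier_vecI)

lemma reach_mat_carrier[simp]: "reach_mat k j \<in> carrier_mat n j"
  by (simp add: reach_mat_def)

lemma dim_reach_mat[simp]: "dim_row (reach_mat k j) = n" "dim_col (reach_mat k j) = j"
  by (simp_all add: reach_mat_def)

lemma transition_add: "transition k (p + q) = transition (k + int p) q * transition k p"
proof (induction q)
  case (Suc q)
  then show ?case
    by (simp add: assoc_mult_mat[of _ n n _ n _ n] algebra_simps)
qed (simp add: left_mult_one_mat[of _ n n])

lemma transition_Suc_right: "transition k (Suc j) = transition (k + 1) j * A k"
  using transition_add[of k 1 j] by (simp add: right_mult_one_mat[of _ n n])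

lemma col_reach_mat:
  "l < j \<Longrightarrow>
    col (reach_mat k j) l = transition (k + int l + 1) (j - l - 1) *\<^sub>v col (b (k + int l)) 0"
  by (intro eq_vecI) (auto simp: reach_mat_def)

lemma index_reach_mat_Suc:
  assumes i: "i < n" and l: "l < Suc j"
  shows "reach_mat k (Suc j) $$ (i, l) =
    (if l < j then (A (k + int j) * reach_mat k j) $$ (i, l) else b (k + int j) $$ (i, 0))"
proof (cases "l < j")
  case True
  let ?\<Phi> = "transition (k + int l + 1) (j - l - 1)"
  have "Suc j - l - 1 = Suc (j - l - 1)" "k + int l + 1 + int (j - l - 1) = k + int j"
    using True by auto
  then have "reach_mat k (Suc j) $$ (i, l) = ((A (k + int j) * ?\<Phi>) *\<^sub>v col (b (k + int l)) 0) $ i"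
    using i l by (simp add: reach_mat_def)
  also have "\<dots> = (A (k + int j) *\<^sub>v col (reach_mat k j) l) $ i"
    using True by (simp add: col_reach_mat assoc_mult_mat_vec[of _ n n _ n])
  also have "\<dots> = (A (k + int j) * reach_mat k j) $$ (i, l)"
    using i True by (simp add: col_mult2[of _ n n _ j, symmetric])
  finally show ?thesis using True by simp
next
  case False
  with l have "l = j" by simp
  with i show ?thesis by (simp add: reach_mat_def)
qed

lemma state_carrier: "x \<in> carrier_vec n \<Longrightarrow> state A b k x u j \<in> carrier_vec n"
  by (induction j) (auto intro!: add_carrier_vec mult_mat_vec_carrier[of _ n n])

lemma state_cong:
  "(\<And>t. t < j \<Longrightarrow> u (k + int t) = v (k + int t)) \<Longrightarrow> state A b k x u j = state A b k x v j"
  by (induction j) auto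

lemma state_from_zero: "state A b k (0\<^sub>v n) u j = reach_mat k j *\<^sub>v vec j (\<lambda>l. u (k + int l))"
proof (induction j)
  case 0
  show ?case by (intro eq_vecI) (auto simp: reach_mat_def scalar_prod_def)
next
  case (Suc j)
  let ?u = "\<lambda>j. vec j (\<lambda>l. u (k + int l))"
  define M where "M = A (k + int j) * reach_mat k j"
  have M: "M \<in> carrier_mat n j" unfolding M_def by (rule mult_carrier_mat[of _ n n]) simp_all
  have "reach_mat k (Suc j) *\<^sub>v ?u (Suc j)
      = M *\<^sub>v ?u j + u (k + int j) \<cdot>\<^sub>v col (b (k + int j)) 0"
  proof (intro eq_vecI)
    fix i assume "i < dim_vec (M *\<^sub>v ?u j + u (k + int j) \<cdot>\<^sub>v col (b (k + int j)) 0)"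
    then have i: "i < n" by simp
    then show "(reach_mat k (Suc j) *\<^sub>v ?u (Suc j)) $ i
        = (M *\<^sub>v ?u j + u (k + int j) \<cdot>\<^sub>v col (b (k + int j)) 0) $ i"
      using M by (simp add: scalar_prod_def index_reach_mat_Suc flip: M_def)
  qed simp
  with Suc.IH show ?case by (simp add: M_def assoc_mult_mat_vec[of _ n n _ j])
qed

lemma controllable_imp_reach_mat_left_invertible:
  assumes "completely_controllable n A b"
  shows "\<exists>Ri \<in> carrier_mat n n. Ri * reach_mat k n = 1\<^sub>m n"
proof -
  have "\<forall>i. \<exists>v. i < n \<longrightarrow> state A b k (0\<^sub>v n) v n = unit_vec n i"
    using assms unfolding completely_controllable_def by auto
  then obtain v where v: "\<And>i. i < n \<Longrightarrow> state A b k (0\<^sub>v n) (v i) n = unit_vec n i"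
    by metis
  define U where "U = mat n n (\<lambda>(l, i). v i (k + int l))"
  have U: "U \<in> carrier_mat n n" by (simp add: U_def)
  have "reach_mat k n * U = 1\<^sub>m n"
  proof (rule eq_matI)
    fix a i assume "a < dim_row (1\<^sub>m n :: real mat)" "i < dim_col (1\<^sub>m n :: real mat)"
    then have a: "a < n" and i: "i < n" by auto
    have "col U i = vec n (\<lambda>l. v i (k + int l))" using i by (auto simp: U_def)
    then have "(reach_mat k n * U) $$ (a, i) = state A b k (0\<^sub>v n) (v i) n $ a"
      using a i U by (simp add: state_from_zero)
    then show "(reach_mat k n * U) $$ (a, i) = 1\<^sub>m n $$ (a, i)" using v[OF i] a i by simp
  qed (use U in auto)
  then show ?thesis using U mat_mult_left_right_inverse[OF reach_mat_carrier U] by blast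
qed

lemma transition_mult_col_reach_mat:
  assumes "j \<le> l" "l < n"
  shows "transition m j *\<^sub>v col (reach_mat (m - int n) n) l
    = col (reach_mat (m + int j - int n) n) (l - j)"
proof -
  define a where "a = m - int n + int l"
  let ?p = "n - l - 1"
  have shift: "m + int j - int n + int (l - j) = a" "n - (l - j) - 1 = ?p + j"
    using assms by (auto simp: a_def)
  have "col (reach_mat (m - int n) n) l = transition (a + 1) ?p *\<^sub>v col (b a) 0"
    using col_reach_mat[of l n "m - int n"] assms unfolding a_def[symmetric] by simp
  moreover have "transition m j * transition (a + 1) ?p = transition (a + 1) (?p + j)"
    using transition_add[of "a + 1" ?p j] assms by (simp add: a_def)
  moreover have "col (reach_mat (m + int j - int n) n) (l - j)
      = transition (a + 1) (?p + j) *\<^sub>v col (b a) 0"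
    using col_reach_mat[of "l - j" n "m + int j - int n"] assms unfolding shift by simp
  ultimately show ?thesis
    by (simp add: assoc_mult_mat_vec[of _ n n _ n, symmetric])
qed

lemma last_col_reach_mat: "0 < n \<Longrightarrow> col (reach_mat (m - int n) n) (n - 1) = col (b (m - 1)) 0"
proof -
  assume "0 < n"
  then have "m - int n + int (n - 1) = m - 1" by simp
  with \<open>0 < n\<close> show ?thesis by (simp add: col_reach_mat)
qed

context
  fixes Ri :: "int \<Rightarrow> real mat"
  assumes Ri_carrier[simp]: "\<And>m. Ri m \<in> carrier_mat n n"
    and Ri_reach_mat: "\<And>m. Ri m * reach_mat (m - int n) n = 1\<^sub>m n"
begin

definition canonical_transform :: "int \<Rightarrow> real mat" where
  "canonical_transform k = mat n n (\<lambda>(j, c). (Ri (k + int j) * transition k j) $$ (0, c))"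

lemma canonical_transform_carrier[simp]: "canonical_transform k \<in> carrier_mat n n"
  by (simp add: canonical_transform_def)

lemma dim_canonical_transform[simp]:
  "dim_row (canonical_transform k) = n" "dim_col (canonical_transform k) = n"
  by (simp_all add: canonical_transform_def)

lemma dim_Ri[simp]: "dim_row (Ri m) = n" "dim_col (Ri m) = n"
  using Ri_carrier by blast+

lemma canonical_transform_mult_vec:
  assumes j: "j < n" and x: "x \<in> carrier_vec n"
  shows "(canonical_transform k *\<^sub>v x) $ j = (Ri (k + int j) *\<^sub>v (transition k j *\<^sub>v x)) $ 0"
proof -
  have "row (canonical_transform k) j = row (Ri (k + int j) * transition k j) 0"
    using j by (intro eq_vecI) (auto simp: canonical_transform_def)
  then show ?thesis
    using j x by (simp add: assoc_mult_mat_vec[of _ n n _ n, symmetric])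
qed

lemma Ri_mult_col_reach_mat:
  assumes "l < n"
  shows "(Ri m *\<^sub>v col (reach_mat (m - int n) n) l) $ 0 = (if l = 0 then 1 else 0)"
proof -
  have "(Ri m *\<^sub>v col (reach_mat (m - int n) n) l) $ 0
      = (Ri m * reach_mat (m - int n) n) $$ (0, l)"
    using assms by simp
  then show ?thesis using assms by (simp add: Ri_reach_mat)
qed

lemma canonical_transform_mult_b:
  assumes i: "i < n"
  shows "(canonical_transform (k + 1) * b k) $$ (i, 0) = (if i = n - 1 then 1 else 0)"
proof -
  have "col (b k) 0 = col (reach_mat (k + 1 - int n) n) (n - 1)"
    using last_col_reach_mat[of "k + 1"] i by simp
  then have "transition (k + 1) i *\<^sub>v col (b k) 0
      = col (reach_mat (k + 1 + int i - int n) n) (n - 1 - i)"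
    using transition_mult_col_reach_mat[of i "n - 1" "k + 1"] i by simp
  then show ?thesis
    using canonical_transform_mult_vec[of i "col (b k) 0" "k + 1"]
      Ri_mult_col_reach_mat[of "n - 1 - i" "k + 1 + int i"] i
    by auto
qed

lemma canonical_transform_mult_A:
  assumes i: "Suc i < n" and x: "x \<in> carrier_vec n"
  shows "(canonical_transform (k + 1) *\<^sub>v (A k *\<^sub>v x)) $ i = (canonical_transform k *\<^sub>v x) $ Suc i"
proof -
  have "transition (k + 1) i *\<^sub>v (A k *\<^sub>v x) = transition k (Suc i) *\<^sub>v x"
    unfolding transition_Suc_right using x
    by (simp add: assoc_mult_mat_vec[of _ n n _ n] del: transition.simps)
  moreover have "A k *\<^sub>v x \<in> carrier_vec n"
    using x by (rule mult_mat_vec_carrier[OF A_carrier])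
  ultimately show ?thesis
    using canonical_transform_mult_vec[of i "A k *\<^sub>v x" "k + 1"]
      canonical_transform_mult_vec[of "Suc i" x k] i x
    by (simp add: add.assoc del: transition.simps)
qed

lemma canonical_transform_mult_reach_mat:
  assumes "j \<le> l" "l < n"
  shows "(canonical_transform k * reach_mat (k - int n) n) $$ (j, l) = (if j = l then 1 else 0)"
  using canonical_transform_mult_vec[of j "col (reach_mat (k - int n) n) l" k]
    transition_mult_col_reach_mat[of j l k] Ri_mult_col_reach_mat[of "l - j" "k + int j"] assms
  by auto

lemma det_canonical_transform: "det (canonical_transform k) \<noteq> 0"
proof -
  let ?L = "canonical_transform k * reach_mat (k - int n) n"
  have L: "?L \<in> carrier_mat n n" by (rule mult_carrier_mat[of _ n n]) simp_all
  have "det ?L = prod_list (diag_mat ?L)"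
    using L canonical_transform_mult_reach_mat by (intro det_lower_triangular) auto
  also have "diag_mat ?L = map (\<lambda>_. 1) [0..<n]"
    using canonical_transform_mult_reach_mat by (auto simp: diag_mat_def intro!: map_cong)
  finally show ?thesis by (auto simp: det_mult[of _ n] map_replicate_const)
qed

lemma controller_canonical_canonical_transform:
  assumes Ti: "\<And>k. Ti k \<in> carrier_mat n n" "\<And>k. canonical_transform k * Ti k = 1\<^sub>m n"
  shows "controller_canonical n
    (\<lambda>k. canonical_transform (k + 1) * A k * Ti k) (\<lambda>k. canonical_transform (k + 1) * b k)"
  unfolding controller_canonical_def
proof (intro allI conjI impI)
  fix k i assume "i < n"
  then show "(canonical_transform (k + 1) * b k) $$ (i, 0) = (if i = n - 1 then 1 else 0)"
    by (rule canonical_transform_mult_b)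
next
  fix k i j assume i: "i < n - 1" and j: "j < n"
  have col_j: "col (Ti k) j \<in> carrier_vec n"
    using Ti(1)[of k] j by (simp add: carrier_vecI)
  have "(canonical_transform (k + 1) * A k * Ti k) $$ (i, j)
      = (canonical_transform (k + 1) *\<^sub>v (A k *\<^sub>v col (Ti k) j)) $ i"
    using i j Ti(1)[of k]
    by (simp add: assoc_mult_mat[of _ n n _ n _ n] col_mult2[of "A k" n n "Ti k" n j])
  also have "\<dots> = (canonical_transform k *\<^sub>v col (Ti k) j) $ Suc i"
    using i col_j by (intro canonical_transform_mult_A) simp_all
  also have "\<dots> = (canonical_transform k * Ti k) $$ (Suc i, j)"
    using i j Ti(1)[of k] by simp
  finally show "(canonical_transform (k + 1) * A k * Ti k) $$ (i, j) = (if j = i + 1 then 1 else 0)"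
    using i j Ti(2) by simp
qed

end

lemma controllable_imp_similar_canonical:
  assumes "completely_controllable n A b"
  obtains T Ti where "\<And>k. T k * Ti k = 1\<^sub>m n" "\<And>k. Ti k * T k = 1\<^sub>m n"
    "\<And>k. T k \<in> carrier_mat n n" "\<And>k. Ti k \<in> carrier_mat n n"
    "controller_canonical n (\<lambda>k. T (k + 1) * A k * Ti k) (\<lambda>k. T (k + 1) * b k)"
proof -
  have "\<forall>m. \<exists>R \<in> carrier_mat n n. R * reach_mat (m - int n) n = 1\<^sub>m n"
    using controllable_imp_reach_mat_left_invertible[OF assms] by blast
  then obtain Ri where Ri: "\<And>m. Ri m \<in> carrier_mat n n" "\<And>m. Ri m * reach_mat (m - int n) n = 1\<^sub>m n"
    by metis
  have "\<forall>k. \<exists>X \<in> carrier_mat n n.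
      canonical_transform Ri k * X = 1\<^sub>m n \<and> X * canonical_transform Ri k = 1\<^sub>m n"
    using det_non_zero_imp_unit[OF canonical_transform_carrier[OF Ri] det_canonical_transform[OF Ri],
        of _ undefined]
    unfolding Units_def ring_mat_def by auto
  then obtain Ti where Ti: "\<And>k. Ti k \<in> carrier_mat n n"
      "\<And>k. canonical_transform Ri k * Ti k = 1\<^sub>m n" "\<And>k. Ti k * canonical_transform Ri k = 1\<^sub>m n"
    by metis
  show ?thesis
    by (rule that[OF Ti(2) Ti(3) canonical_transform_carrier[OF Ri] Ti(1)
          controller_canonical_canonical_transform[OF Ri Ti(1) Ti(2)]])
qed

lemma controller_canonical_step:
  assumes canon: "controller_canonical n A b" and i: "i < n" and x: "x \<in> carrier_vec n"
  shows "(A k *\<^sub>v x + v \<cdot>\<^sub>v col (b k) 0) $ i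
    = (if i = n - 1 then row (A k) (n - 1) \<bullet> x + v else x $ Suc i)"
proof (cases "i = n - 1")
  case True
  with canon i x show ?thesis by (simp add: controller_canonical_def)
next
  case False
  with i have i': "i < n - 1" by simp
  have "row (A k) i \<bullet> x = (\<Sum>t\<in>{0..<n}. (if t = Suc i then 1 else 0) * x $ t)"
    using canon i' x unfolding controller_canonical_def scalar_prod_def by (auto intro!: sum.cong)
  also have "\<dots> = (\<Sum>t\<in>{0..<n}. if t = Suc i then x $ t else 0)"
    by (intro sum.cong) auto
  also have "\<dots> = x $ Suc i" using i' by simp
  finally show ?thesis
    using canon i' x unfolding controller_canonical_def by simp
qed

lemma controller_canonical_shift:
  assumes canon: "controller_canonical n A b" and xs: "xs \<in> carrier_vec n" and "j \<le> n"
  shows "\<exists>u. \<forall>i<n. state A b k xs u j $ i = (if i + j < n then xs $ (i + j) else w $ (i + j - n))"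
  using \<open>j \<le> n\<close>
proof (induction j)
  case (Suc j)
  then obtain u where u: "\<forall>i<n. state A b k xs u j $ i = (if i + j < n then xs $ (i + j) else w $ (i + j - n))"
    by auto
  let ?x = "state A b k xs u j" and ?m = "k + int j"
  define v where "v = u(?m := w $ j - row (A ?m) (n - 1) \<bullet> ?x)"
  have "state A b k xs v j = ?x"
    by (rule state_cong) (simp add: v_def)
  then have step: "state A b k xs v (Suc j) = A ?m *\<^sub>v ?x + v ?m \<cdot>\<^sub>v col (b ?m) 0"
    by simp
  have x: "?x \<in> carrier_vec n" using state_carrier[OF xs] .
  have "state A b k xs v (Suc j) $ i = (if i + Suc j < n then xs $ (i + Suc j) else w $ (i + Suc j - n))"
    if i: "i < n" for i
    unfolding step controller_canonical_step[OF canon i x]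
    using u i Suc.prems by (auto simp: v_def)
  then show ?case by blast
qed simp

lemma controller_canonical_imp_controllable:
  assumes "controller_canonical n A b"
  shows "completely_controllable n A b"
  unfolding completely_controllable_def
proof (intro allI ballI)
  fix k and xs w :: "real vec"
  assume xs: "xs \<in> carrier_vec n" and w: "w \<in> carrier_vec n"
  obtain u where "\<forall>i<n. state A b k xs u n $ i = w $ i"
    using controller_canonical_shift[OF assms xs, of n k w] by auto
  then have "state A b k xs u n = w"
    using state_carrier[OF xs] w by (intro eq_vecI) auto
  then show "\<exists>u. state A b k xs u n = w" by blast
qed

context
  fixes T Ti :: "int \<Rightarrow> real mat"
  assumes T_carrier: "\<And>k. T k \<in> carrier_mat n n" and Ti_carrier: "\<And>k. Ti k \<in> carrier_mat n n"
    and Ti_T: "\<And>k. Ti k * T k = 1\<^sub>m n"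
begin

lemma state_similarity:
  assumes x: "x \<in> carrier_vec n"
  shows "T (k + int j) *\<^sub>v state A b k x u j
    = state (\<lambda>k. T (k + 1) * A k * Ti k) (\<lambda>k. T (k + 1) * b k) k (T k *\<^sub>v x) u j"
proof (induction j)
  case (Suc j)
  let ?m = "k + int j" and ?x = "state A b k x u j"
  have x': "?x \<in> carrier_vec n" using state_carrier[OF x] .
  have TA: "T (?m + 1) * A ?m \<in> carrier_mat n n"
    using T_carrier by (rule mult_carrier_mat) simp
  have "T (?m + 1) * A ?m * Ti ?m * T ?m = T (?m + 1) * A ?m * (Ti ?m * T ?m)"
    using TA Ti_carrier T_carrier by (rule assoc_mult_mat)
  then have "T (?m + 1) * A ?m * Ti ?m * T ?m = T (?m + 1) * A ?m"
    using TA by (simp add: Ti_T)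
  moreover have "T (?m + 1) * A ?m * Ti ?m \<in> carrier_mat n n"
    using TA Ti_carrier by (rule mult_carrier_mat)
  ultimately have "(T (?m + 1) * A ?m * Ti ?m) *\<^sub>v (T ?m *\<^sub>v ?x) = T (?m + 1) *\<^sub>v (A ?m *\<^sub>v ?x)"
    using TA T_carrier x' by (simp add: assoc_mult_mat_vec[of _ n n _ n, symmetric])
  moreover have "T (?m + 1) *\<^sub>v col (b ?m) 0 = col (T (?m + 1) * b ?m) 0"
    using T_carrier by (intro col_mult2[of _ n n _ 1, symmetric]) auto
  moreover have "T (?m + 1) *\<^sub>v (A ?m *\<^sub>v ?x + u ?m \<cdot>\<^sub>v col (b ?m) 0)
      = T (?m + 1) *\<^sub>v (A ?m *\<^sub>v ?x) + u ?m \<cdot>\<^sub>v (T (?m + 1) *\<^sub>v col (b ?m) 0)"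
    using mult_add_distrib_mat_vec[OF T_carrier mult_mat_vec_carrier[OF A_carrier x']
        smult_carrier_vec[THEN iffD2, OF b_col_carrier]]
      mult_mat_vec[OF T_carrier b_col_carrier]
    by simp
  moreover have "k + int (Suc j) = ?m + 1" by simp
  ultimately show ?case
    using Suc.IH by (simp only: state.simps)
qed simp

lemma controllable_similarity:
  assumes "completely_controllable n (\<lambda>k. T (k + 1) * A k * Ti k) (\<lambda>k. T (k + 1) * b k)"
  shows "completely_controllable n A b"
  unfolding completely_controllable_def
proof (intro allI ballI)
  fix k and xs xf :: "real vec"
  assume xs: "xs \<in> carrier_vec n" and xf: "xf \<in> carrier_vec n"
  obtain u where u: "state (\<lambda>k. T (k + 1) * A k * Ti k) (\<lambda>k. T (k + 1) * b k) k (T k *\<^sub>v xs) u n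
      = T (k + int n) *\<^sub>v xf"
    using assms T_carrier xs xf unfolding completely_controllable_def by (meson mult_mat_vec_carrier)
  have cancel: "Ti m *\<^sub>v (T m *\<^sub>v y) = y" if "y \<in> carrier_vec n" for m y
    using that T_carrier Ti_carrier by (simp add: assoc_mult_mat_vec[of _ n n _ n, symmetric] Ti_T)
  have "T (k + int n) *\<^sub>v state A b k xs u n = T (k + int n) *\<^sub>v xf"
    using state_similarity[OF xs] u by simp
  then have "state A b k xs u n = xf"
    using cancel state_carrier[OF xs] xf by metis
  then show "\<exists>u. state A b k xs u n = xf" by blast
qed

end

end

lemma is_system_imp_linear_system: "is_system n A b c \<Longrightarrow> linear_system n A b"
  unfolding is_system_def linear_system_def by blast

lemma similarity_alg_equivalent:
  assumes sys: "is_system n A b c"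
    and T: "\<And>k. T k \<in> carrier_mat n n" "\<And>k. Ti k \<in> carrier_mat n n"
    and inv: "\<And>k. T k * Ti k = 1\<^sub>m n" "\<And>k. Ti k * T k = 1\<^sub>m n"
  shows "is_system n (\<lambda>k. T (k + 1) * A k * Ti k) (\<lambda>k. T (k + 1) * b k) (\<lambda>k. c k * Ti k)"
    and "alg_equivalent n A b c (\<lambda>k. T (k + 1) * A k * Ti k) (\<lambda>k. T (k + 1) * b k) (\<lambda>k. c k * Ti k)"
proof -
  have "A k \<in> carrier_mat n n" "b k \<in> carrier_mat n 1" "c k \<in> carrier_mat 1 n" for k
    using sys by (simp_all add: is_system_def)
  then show "is_system n (\<lambda>k. T (k + 1) * A k * Ti k) (\<lambda>k. T (k + 1) * b k) (\<lambda>k. c k * Ti k)"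
    unfolding is_system_def using T by (blast intro: mult_carrier_mat)
  show "alg_equivalent n A b c (\<lambda>k. T (k + 1) * A k * Ti k) (\<lambda>k. T (k + 1) * b k) (\<lambda>k. c k * Ti k)"
    unfolding alg_equivalent_def by (intro exI[of _ T] exI[of _ Ti]) (simp add: T inv)
qed

lemma alg_equivalent_controllable:
  assumes "is_system n A b c" and "alg_equivalent n A b c A' b' c'"
    and "completely_controllable n A' b'"
  shows "completely_controllable n A b"
proof -
  obtain T Ti where TTi: "\<forall>k. T k \<in> carrier_mat n n \<and> Ti k \<in> carrier_mat n n \<and>
      T k * Ti k = 1\<^sub>m n \<and> Ti k * T k = 1\<^sub>m n \<and>
      A' k = T (k + 1) * A k * Ti k \<and> b' k = T (k + 1) * b k \<and> c' k = c k * Ti k"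
    using assms(2) unfolding alg_equivalent_def by blast
  then have "A' = (\<lambda>k. T (k + 1) * A k * Ti k)" "b' = (\<lambda>k. T (k + 1) * b k)"
    by auto
  with TTi assms(3) show ?thesis
    by (intro linear_system.controllable_similarity[OF is_system_imp_linear_system[OF assms(1)],
          of T Ti]) auto
qed

theorem theorem2:
  fixes n :: nat and A b c :: "int \<Rightarrow> real mat"
  assumes "is_system n A b c"
  shows "completely_controllable n A b \<longleftrightarrow>
    (\<exists>A' b' c'. is_system n A' b' c' \<and> alg_equivalent n A b c A' b' c' \<and>
                controller_canonical n A' b')"
proof
  assume "completely_controllable n A b"
  then show "\<exists>A' b' c'. is_system n A' b' c' \<and> alg_equivalent n A b c A' b' c' \<and>
      controller_canonical n A' b'"
  proof (rule linear_system.controllable_imp_similar_canonical[OF is_system_imp_linear_system[OF assms]])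
    fix T Ti
    assume "\<And>k. T k * Ti k = 1\<^sub>m n" "\<And>k. Ti k * T k = 1\<^sub>m n"
      and "\<And>k. T k \<in> carrier_mat n n" "\<And>k. Ti k \<in> carrier_mat n n"
      and "controller_canonical n (\<lambda>k. T (k + 1) * A k * Ti k) (\<lambda>k. T (k + 1) * b k)"
    with similarity_alg_equivalent[OF assms, of T Ti] show ?thesis
      by blast
  qed
next
  assume "\<exists>A' b' c'. is_system n A' b' c' \<and> alg_equivalent n A b c A' b' c' \<and>
      controller_canonical n A' b'"
  then obtain A' b' c' where "is_system n A' b' c'" "alg_equivalent n A b c A' b' c'"
    "controller_canonical n A' b'"
    by blast
  then show "completely_controllable n A b"
    by (intro alg_equivalent_controllable[OF assms] linear_system.controller_canonical_imp_controllable
        is_system_imp_linear_system)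
qed

end
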